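(* Let $0<\alpha<1$ and let $y$ be a sufficiently differentiable function on an interval $[0,h_0]$, $h_0>0$. Then, as $h\to 0^+$, $$y(h)-y(0)-h^\alpha\,\Gamma(2-\alpha)\,y^{(\alpha)}(h)=O\left(h^2\right).$$
   Context: The Caputo derivative of order $\alpha\in(0,1)$ is $y^{(\alpha)}(h)=\frac{1}{\Gamma(1-\alpha)}\int_0^h \frac{y'(\xi)}{(h-\xi)^{\alpha}}\,d\xi$. "Sufficiently differentiable" means $y\in C^r$ for some sufficiently large $r$. *)

theory Defs
  imports "HOL-Analysis.Analysis" "HOL-Library.Landau_Symbols"
begin

definition Cr_on :: "nat \<Rightarrow> real set \<Rightarrow> (real \<Rightarrow> real) \<Rightarrow> bool" where
  "Cr_on r S y \<longleftrightarrow> (\<exists>D :: nat \<Rightarrow> real \<Rightarrow> real.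
      (\<forall>x\<in>S. D 0 x = y x) \<and>
      (\<forall>k<r. \<forall>x\<in>S. (D k has_real_derivative D (Suc k) x) (at x within S)) \<and>
      (\<forall>k\<le>r. continuous_on S (D k)))"

definition caputo :: "real \<Rightarrow> (real \<Rightarrow> real) \<Rightarrow> real \<Rightarrow> real" where
  "caputo \<alpha> y h = (1 / Gamma (1 - \<alpha>)) *
      integral {0..h} (\<lambda>\<xi>. deriv y \<xi> / (h - \<xi>) powr \<alpha>)"

end

theory Submission imports Defs begin

text \<open>Let \<open>g = y'\<close>. Since \<open>\<integral>\<^sub>0\<^sup>h (h-\<xi>)\<^sup>-\<^sup>\<alpha> d\<xi> = h\<^sup>1\<^sup>-\<^sup>\<alpha>/(1-\<alpha>)\<close> and \<open>\<Gamma>(2-\<alpha>) = (1-\<alpha>) \<Gamma>(1-\<alpha>)\<close>,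
  the term \<open>h\<^sup>\<alpha> \<Gamma>(2-\<alpha>) y\<^sup>(\<^sup>\<alpha>\<^sup>)(h)\<close> equals \<open>h g(h)\<close> plus \<open>(1-\<alpha>) h\<^sup>\<alpha>\<close> times the integral of
  \<open>(g(\<xi>) - g(h)) / (h-\<xi>)\<^sup>\<alpha>\<close>. If \<open>g\<close> is \<open>M\<close>-Lipschitz, that integrand is bounded by
  \<open>M (h-\<xi>)\<^sup>1\<^sup>-\<^sup>\<alpha>\<close>, so the correction term is \<open>O(h\<^sup>2)\<close>; and \<open>y(h) - y(0) - h g(h)\<close> is
  \<open>O(h\<^sup>2)\<close> by the mean value inequality. Hence \<open>y \<in> C\<^sup>2\<close> suffices.\<close>

lemma has_integral_powr_diff:
  fixes h c :: real
  assumes "0 < h" "c > -1"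
  shows "((\<lambda>\<xi>. (h - \<xi>) powr c) has_integral h powr (c + 1) / (c + 1)) {0..h}"
proof -
  define F where "F = (\<lambda>\<xi>::real. - ((h - \<xi>) powr (c + 1)) / (c + 1))"
  have "((\<lambda>\<xi>. (h - \<xi>) powr c) has_integral (F h - F 0)) {0..h}"
  proof (rule fundamental_theorem_of_calculus_interior)
    show "continuous_on {0..h} F"
      unfolding F_def using assms by (intro continuous_intros continuous_on_powr') auto
    fix x assume x: "x \<in> {0<..<h}"
    have "((\<lambda>\<xi>. (h - \<xi>) powr (c + 1)) has_real_derivative
            (c + 1) * (h - x) powr (c + 1 - 1) * (-1)) (at x)"
      using x by (auto intro!: derivative_eq_intros DERIV_chain2[OF has_real_derivative_powr])
    then have "(F has_real_derivative (h - x) powr c) (at x)"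
      unfolding F_def using assms x by (auto intro!: derivative_eq_intros)
    then show "(F has_vector_derivative (h - x) powr c) (at x)"
      by (simp add: has_real_derivative_iff_has_vector_derivative)
  qed (use assms in auto)
  then show ?thesis
    unfolding F_def by simp
qed

lemma Gamma_two_minus:
  fixes \<alpha> :: real
  assumes "\<alpha> < 1"
  shows "Gamma (2 - \<alpha>) = (1 - \<alpha>) * Gamma (1 - \<alpha>)"
proof -
  have "1 - \<alpha> \<notin> \<int>\<^sub>\<le>\<^sub>0"
    using assms by (auto dest: nonpos_Ints_nonpos)
  then show ?thesis
    using Gamma_plus1[of "1 - \<alpha>"] by simp
qed

lemma first_order_taylor_bound:
  fixes f g :: "real \<Rightarrow> real"
  assumes "a \<le> b"
    and f: "\<And>x. x \<in> {a..b} \<Longrightarrow> (f has_real_derivative g x) (at x within {a..b})"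
    and g: "\<And>x. x \<in> {a..b} \<Longrightarrow> \<bar>g x - g b\<bar> \<le> M * (b - x)"
  shows "\<bar>f b - f a - (b - a) * g b\<bar> \<le> M * (b - a)\<^sup>2"
proof -
  have "norm ((\<lambda>t. f t - t * g b) b - (\<lambda>t. f t - t * g b) a) \<le> (M * (b - a)) * norm (b - a)"
  proof (rule field_differentiable_bound[of "{a..b}" _ "\<lambda>t. g t - g b"])
    fix x assume x: "x \<in> {a..b}"
    show "((\<lambda>t. f t - t * g b) has_field_derivative g x - g b) (at x within {a..b})"
      using f[OF x] by (auto intro!: derivative_eq_intros)
    have "0 \<le> M * (b - a)"
      using g[of a] \<open>a \<le> b\<close> abs_ge_zero order_trans by fastforce
    then have "M * (b - x) \<le> M * (b - a)"
      using x by (cases "a = b") (auto simp: zero_le_mult_iff intro: mult_left_mono)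
    then show "norm (g x - g b) \<le> M * (b - a)"
      using g[OF x] by simp
  qed (use \<open>a \<le> b\<close> in auto)
  then show ?thesis
    using \<open>a \<le> b\<close> by (simp add: power2_eq_square algebra_simps)
qed

lemma abs_div_powr_le:
  fixes a \<xi> h :: real
  assumes "\<xi> \<le> h" "\<bar>a\<bar> \<le> M * (h - \<xi>)"
  shows "\<bar>a / (h - \<xi>) powr \<alpha>\<bar> \<le> M * (h - \<xi>) powr (1 - \<alpha>)"
proof (cases "\<xi> = h")
  case False
  then have "h - \<xi> > 0"
    using assms(1) by simp
  then have "\<bar>a / (h - \<xi>) powr \<alpha>\<bar> \<le> M * (h - \<xi>) / (h - \<xi>) powr \<alpha>"
    using assms(2) by (simp add: abs_div divide_right_mono)
  also have "\<dots> = M * (h - \<xi>) powr (1 - \<alpha>)"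
    using \<open>h - \<xi> > 0\<close> by (simp add: powr_diff)
  finally show ?thesis .
qed simp

lemma continuous_on_diff_div_powr:
  fixes g :: "real \<Rightarrow> real"
  assumes "\<alpha> < 1" "continuous_on {0..h} g"
    and lip: "\<And>\<xi>. \<xi> \<in> {0..h} \<Longrightarrow> \<bar>g \<xi> - g h\<bar> \<le> M * (h - \<xi>)"
  shows "continuous_on {0..h} (\<lambda>\<xi>. (g \<xi> - g h) / (h - \<xi>) powr \<alpha>)"
  unfolding continuous_on_eq_continuous_within
proof
  fix x assume x: "x \<in> {0..h}"
  show "continuous (at x within {0..h}) (\<lambda>\<xi>. (g \<xi> - g h) / (h - \<xi>) powr \<alpha>)"
  proof (cases "x = h")
    case False
    then have "h - x > 0"
      using x by auto
    moreover have "continuous (at x within {0..h}) g"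
      using assms(2) x by (simp add: continuous_on_eq_continuous_within)
    ultimately show ?thesis
      by (intro continuous_intros) auto
  next
    case True
    have "continuous_on {0..h} (\<lambda>\<xi>. (h - \<xi>) powr (1 - \<alpha>))"
      using assms(1) by (intro continuous_on_powr' continuous_intros) auto
    then have "((\<lambda>\<xi>. (h - \<xi>) powr (1 - \<alpha>)) \<longlongrightarrow> (h - h) powr (1 - \<alpha>)) (at h within {0..h})"
      using x True unfolding continuous_on_def by blast
    then have "((\<lambda>\<xi>. (h - \<xi>) powr (1 - \<alpha>)) \<longlongrightarrow> 0) (at h within {0..h})"
      by simp
    moreover have "norm ((g \<xi> - g h) / (h - \<xi>) powr \<alpha>) \<le> norm ((h - \<xi>) powr (1 - \<alpha>)) * M"
      if "\<xi> \<in> {0..h}" for \<xi>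
      using abs_div_powr_le[of \<xi> h "g \<xi> - g h" M \<alpha>] that lip[OF that] by (simp add: mult.commute)
    then have "\<forall>\<^sub>F \<xi> in at h within {0..h}.
        norm ((g \<xi> - g h) / (h - \<xi>) powr \<alpha>) \<le> norm ((h - \<xi>) powr (1 - \<alpha>)) * M"
      by (simp add: eventually_at_filter)
    ultimately have "((\<lambda>\<xi>. (g \<xi> - g h) / (h - \<xi>) powr \<alpha>) \<longlongrightarrow> 0) (at h within {0..h})"
      by (rule tendsto_0_le)
    then show ?thesis
      using True by (simp add: continuous_within)
  qed
qed

lemma integral_diff_div_powr_bound:
  fixes g :: "real \<Rightarrow> real"
  assumes "\<alpha> < 1" "0 < h" "continuous_on {0..h} g"
    and lip: "\<And>\<xi>. \<xi> \<in> {0..h} \<Longrightarrow> \<bar>g \<xi> - g h\<bar> \<le> M * (h - \<xi>)"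
  shows "\<bar>integral {0..h} (\<lambda>\<xi>. (g \<xi> - g h) / (h - \<xi>) powr \<alpha>)\<bar> \<le> M * h powr (2 - \<alpha>) / (2 - \<alpha>)"
proof -
  have bound: "norm ((g \<xi> - g h) / (h - \<xi>) powr \<alpha>) \<le> M * (h - \<xi>) powr (1 - \<alpha>)"
    if "\<xi> \<in> {0..h}" for \<xi>
    unfolding real_norm_def using that lip[OF that] by (intro abs_div_powr_le) auto
  have majorant: "((\<lambda>\<xi>. M * (h - \<xi>) powr (1 - \<alpha>)) has_integral M * (h powr (2 - \<alpha>) / (2 - \<alpha>))) {0..h}"
    using has_integral_mult_right[OF has_integral_powr_diff[of h "1 - \<alpha>"], of M] assms
    by (simp add: algebra_simps)
  have "norm (integral {0..h} (\<lambda>\<xi>. (g \<xi> - g h) / (h - \<xi>) powr \<alpha>))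
      \<le> integral {0..h} (\<lambda>\<xi>. M * (h - \<xi>) powr (1 - \<alpha>))"
  proof (rule integral_norm_bound_integral)
    show "(\<lambda>\<xi>. (g \<xi> - g h) / (h - \<xi>) powr \<alpha>) integrable_on {0..h}"
      using continuous_on_diff_div_powr[OF assms(1,3) lip] by (rule integrable_continuous_interval)
    show "(\<lambda>\<xi>. M * (h - \<xi>) powr (1 - \<alpha>)) integrable_on {0..h}"
      using majorant by (rule has_integral_integrable)
  qed (rule bound)
  then show ?thesis
    using integral_unique[OF majorant] by simp
qed

lemma integral_div_powr_split:
  fixes f g :: "real \<Rightarrow> real"
  assumes "\<alpha> < 1" "0 < h" "continuous_on {0..h} g"
    and lip: "\<And>\<xi>. \<xi> \<in> {0..h} \<Longrightarrow> \<bar>g \<xi> - g h\<bar> \<le> M * (h - \<xi>)"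
    and fg: "\<And>\<xi>. \<xi> \<in> {0<..<h} \<Longrightarrow> f \<xi> = g \<xi>"
  shows "integral {0..h} (\<lambda>\<xi>. f \<xi> / (h - \<xi>) powr \<alpha>)
       = g h * (h powr (1 - \<alpha>) / (1 - \<alpha>)) + integral {0..h} (\<lambda>\<xi>. (g \<xi> - g h) / (h - \<xi>) powr \<alpha>)"
proof -
  have kernel: "((\<lambda>\<xi>. g h * (h - \<xi>) powr (- \<alpha>)) has_integral g h * (h powr (1 - \<alpha>) / (1 - \<alpha>))) {0..h}"
    using has_integral_mult_right[OF has_integral_powr_diff[of h "- \<alpha>"]] assms(1,2) by simp
  have remainder: "(\<lambda>\<xi>. (g \<xi> - g h) / (h - \<xi>) powr \<alpha>) integrable_on {0..h}"
    by (rule integrable_continuous_interval[OF continuous_on_diff_div_powr[OF assms(1,3) lip]])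
  have "integral {0..h} (\<lambda>\<xi>. f \<xi> / (h - \<xi>) powr \<alpha>)
      = integral {0..h} (\<lambda>\<xi>. g h * (h - \<xi>) powr (- \<alpha>) + (g \<xi> - g h) / (h - \<xi>) powr \<alpha>)"
  proof (rule integral_spike[of "{0, h}"])
    fix x assume x: "x \<in> {0..h} - {0, h}"
    then have "h - x > 0"
      by auto
    then show "g h * (h - x) powr (- \<alpha>) + (g x - g h) / (h - x) powr \<alpha> = f x / (h - x) powr \<alpha>"
      using fg[of x] x by (auto simp: powr_minus_divide field_simps)
  qed auto
  also have "\<dots> = g h * (h powr (1 - \<alpha>) / (1 - \<alpha>)) + integral {0..h} (\<lambda>\<xi>. (g \<xi> - g h) / (h - \<xi>) powr \<alpha>)"
    using integral_add[OF has_integral_integrable[OF kernel] remainder] integral_unique[OF kernel]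
    by simp
  finally show ?thesis .
qed

lemma caputo_defect_bound:
  fixes y g :: "real \<Rightarrow> real"
  assumes "\<alpha> < 1" "0 < h"
    and y: "\<And>x. x \<in> {0..h} \<Longrightarrow> (y has_real_derivative g x) (at x within {0..h})"
    and g: "continuous_on {0..h} g"
    and lip: "\<And>\<xi>. \<xi> \<in> {0..h} \<Longrightarrow> \<bar>g \<xi> - g h\<bar> \<le> M * (h - \<xi>)"
  shows "\<bar>y h - y 0 - h powr \<alpha> * Gamma (2 - \<alpha>) * caputo \<alpha> y h\<bar> \<le> 2 * M * h\<^sup>2"
proof -
  define E where "E = integral {0..h} (\<lambda>\<xi>. (g \<xi> - g h) / (h - \<xi>) powr \<alpha>)"
  have "0 \<le> M * h"
    using lip[of 0] \<open>0 < h\<close> abs_ge_zero order_trans by fastforce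
  then have "M \<ge> 0"
    using \<open>0 < h\<close> by (simp add: zero_le_mult_iff)
  have deriv_y: "deriv y x = g x" if "x \<in> {0<..<h}" for x
    using y[of x] that by (intro DERIV_imp_deriv) (auto simp: at_within_interior[of x "{0..h}"])
  have "integral {0..h} (\<lambda>\<xi>. deriv y \<xi> / (h - \<xi>) powr \<alpha>) = g h * (h powr (1 - \<alpha>) / (1 - \<alpha>)) + E"
    unfolding E_def by (rule integral_div_powr_split[OF \<open>\<alpha> < 1\<close> \<open>0 < h\<close> g lip deriv_y])
  then have "h powr \<alpha> * Gamma (2 - \<alpha>) * caputo \<alpha> y h
      = h powr \<alpha> * (1 - \<alpha>) * (g h * (h powr (1 - \<alpha>) / (1 - \<alpha>)) + E)"
    unfolding caputo_def Gamma_two_minus[OF \<open>\<alpha> < 1\<close>]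
    using Gamma_real_pos[of "1 - \<alpha>"] \<open>\<alpha> < 1\<close> by (simp add: less_imp_neq[symmetric])
  also have "\<dots> = h * g h + h powr \<alpha> * (1 - \<alpha>) * E"
    using \<open>\<alpha> < 1\<close> \<open>0 < h\<close> by (simp add: field_simps powr_add[symmetric])
  finally have split: "h powr \<alpha> * Gamma (2 - \<alpha>) * caputo \<alpha> y h = h * g h + h powr \<alpha> * (1 - \<alpha>) * E" .
  have "\<bar>h powr \<alpha> * (1 - \<alpha>) * E\<bar> = h powr \<alpha> * (1 - \<alpha>) * \<bar>E\<bar>"
    using \<open>\<alpha> < 1\<close> by (simp add: abs_mult)
  also have "\<dots> \<le> h powr \<alpha> * (1 - \<alpha>) * (M * h powr (2 - \<alpha>) / (2 - \<alpha>))"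
    using integral_diff_div_powr_bound[OF \<open>\<alpha> < 1\<close> \<open>0 < h\<close> g lip] \<open>\<alpha> < 1\<close>
    unfolding E_def by (intro mult_left_mono) auto
  also have "\<dots> = M * h\<^sup>2 * ((1 - \<alpha>) / (2 - \<alpha>))"
    using \<open>0 < h\<close> by (simp add: field_simps powr_add[symmetric] powr_realpow)
  also have "\<dots> \<le> M * h\<^sup>2"
    using \<open>\<alpha> < 1\<close> \<open>M \<ge> 0\<close> by (intro mult_left_le) auto
  finally have "\<bar>h powr \<alpha> * (1 - \<alpha>) * E\<bar> \<le> M * h\<^sup>2" .
  moreover have "\<bar>y h - y 0 - h * g h\<bar> \<le> M * h\<^sup>2"
    using first_order_taylor_bound[of 0 h y g M] \<open>0 < h\<close> y lip by simp
  ultimately show ?thesis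
    unfolding split by simp
qed

lemma Cr_on_2_imp_lipschitz_derivative:
  fixes y :: "real \<Rightarrow> real"
  assumes "Cr_on 2 S y" "convex S" "compact S"
  obtains g M where "\<And>x. x \<in> S \<Longrightarrow> (y has_real_derivative g x) (at x within S)"
    and "continuous_on S g"
    and "\<And>a b. a \<in> S \<Longrightarrow> b \<in> S \<Longrightarrow> \<bar>g a - g b\<bar> \<le> M * \<bar>a - b\<bar>"
proof -
  obtain D :: "nat \<Rightarrow> real \<Rightarrow> real" where
    D0: "\<forall>x\<in>S. D 0 x = y x"
    and D: "\<forall>k<2. \<forall>x\<in>S. (D k has_real_derivative D (Suc k) x) (at x within S)"
    and cont: "\<forall>k\<le>2. continuous_on S (D k)"
    using assms(1) unfolding Cr_on_def by blast
  have D1: "(D 0 has_real_derivative D 1 x) (at x within S)" if "x \<in> S" for x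
    using D that by simp
  have D2: "(D 1 has_real_derivative D 2 x) (at x within S)" if "x \<in> S" for x
    using D that by (simp add: numeral_2_eq_2)
  have "compact (D 2 ` S)"
    using cont assms(3) by (intro compact_continuous_image) auto
  then obtain M where M: "\<forall>x\<in>S. \<bar>D 2 x\<bar> \<le> M"
    using compact_imp_bounded bounded_real by (metis image_eqI)
  show thesis
  proof
    fix x assume "x \<in> S"
    show "(y has_real_derivative D 1 x) (at x within S)"
      using D1[OF \<open>x \<in> S\<close>]
      by (rule has_field_derivative_transform_within[OF _ zero_less_one \<open>x \<in> S\<close>]) (simp add: D0)
  next
    show "continuous_on S (D 1)"
      using cont by simp
  next
    fix a b assume "a \<in> S" "b \<in> S"
    then show "\<bar>D 1 a - D 1 b\<bar> \<le> M * \<bar>a - b\<bar>"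
      using field_differentiable_bound[of S "D 1" "D 2" M a b] assms(2) D2 M by auto
  qed
qed

theorem lemma11:
  fixes \<alpha> h0 :: real
  assumes "0 < \<alpha>" "\<alpha> < 1" "0 < h0"
  shows "\<exists>r::nat. \<forall>y. Cr_on r {0..h0} y \<longrightarrow>
    (\<lambda>h. y h - y 0 - h powr \<alpha> * Gamma (2 - \<alpha>) * caputo \<alpha> y h)
      \<in> O[at_right 0](\<lambda>h. h ^ 2)"
proof (intro exI[of _ 2] allI impI)
  fix y :: "real \<Rightarrow> real"
  assume "Cr_on 2 {0..h0} y"
  then obtain g M where
    y: "\<And>x. x \<in> {0..h0} \<Longrightarrow> (y has_real_derivative g x) (at x within {0..h0})"
    and g: "continuous_on {0..h0} g"
    and lip: "\<And>a b. a \<in> {0..h0} \<Longrightarrow> b \<in> {0..h0} \<Longrightarrow> \<bar>g a - g b\<bar> \<le> M * \<bar>a - b\<bar>"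
    by (rule Cr_on_2_imp_lipschitz_derivative) auto
  have "\<bar>y h - y 0 - h powr \<alpha> * Gamma (2 - \<alpha>) * caputo \<alpha> y h\<bar> \<le> 2 * M * h\<^sup>2"
    if "0 < h" "h < h0" for h
  proof (rule caputo_defect_bound[OF assms(2) \<open>0 < h\<close>])
    show "(y has_real_derivative g x) (at x within {0..h})" if "x \<in> {0..h}" for x
      using y[of x] that \<open>h < h0\<close> by (auto intro: DERIV_subset)
    show "continuous_on {0..h} g"
      by (rule continuous_on_subset[OF g]) (use \<open>h < h0\<close> in auto)
    show "\<bar>g \<xi> - g h\<bar> \<le> M * (h - \<xi>)" if "\<xi> \<in> {0..h}" for \<xi>
      using lip[of \<xi> h] that \<open>h < h0\<close> by auto
  qed
  then have "\<forall>\<^sub>F h in at_right 0.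
      norm (y h - y 0 - h powr \<alpha> * Gamma (2 - \<alpha>) * caputo \<alpha> y h) \<le> 2 * M * norm (h ^ 2)"
    unfolding eventually_at_right_field using assms(3) by (intro exI[of _ h0]) auto
  then show "(\<lambda>h. y h - y 0 - h powr \<alpha> * Gamma (2 - \<alpha>) * caputo \<alpha> y h) \<in> O[at_right 0](\<lambda>h. h ^ 2)"
    by (rule bigoI)
qed

end
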